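(* Let $G$ be a DAG and let $S\subseteq E(G)$ be a matching of reversible edges of $G$ (a set of reversible edges no two of which share an endpoint). Then $|\mathrm{MEC}(G)|\ge 2^{|S|}$.
   Context: An edge $v\to w$ of a DAG $G$ is reversible if replacing it by $w\to v$ yields a DAG that is Markov equivalent to $G$. Markov equivalence: two DAGs on the same vertex set are Markov equivalent if they have the same d-separation statements, where for vertices $a\neq b$ and $Z\subseteq V\setminus\{a,b\}$, $a,b$ are d-connected given $Z$ if there is a path (sequence of vertices, consecutive ones joined by an edge of either direction, endpoints $a\ne b$) on which every internal non-collider is not in $Z$ and every collider (internal vertex with both adjacent path-edges pointing into it) is in $Z$ or has a descendant (itself or a vertex reachable by a directed path) in $Z$; otherwise d-separated. $\mathrm{MEC}(G)$ is the set of DAGs Markov equivalent to $G$. *)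

theory Defs
  imports Main
begin

definition is_dag :: "'a set \<Rightarrow> ('a \<times> 'a) set \<Rightarrow> bool" where
  "is_dag V E \<longleftrightarrow> finite V \<and> E \<subseteq> V \<times> V \<and> acyclic E"

definition is_path :: "'a set \<Rightarrow> ('a \<times> 'a) set \<Rightarrow> 'a \<Rightarrow> 'a \<Rightarrow> 'a list \<Rightarrow> bool" where
  "is_path V E a b p \<longleftrightarrow>
     2 \<le> length p \<and> hd p = a \<and> last p = b \<and> distinct p \<and> set p \<subseteq> V \<and>
     (\<forall>i. Suc i < length p \<longrightarrow> (p ! i, p ! Suc i) \<in> E \<or> (p ! Suc i, p ! i) \<in> E)"

definition is_collider :: "('a \<times> 'a) set \<Rightarrow> 'a list \<Rightarrow> nat \<Rightarrow> bool" where
  "is_collider E p i \<longleftrightarrow> (p ! (i - 1), p ! i) \<in> E \<and> (p ! Suc i, p ! i) \<in> E"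

definition d_connected :: "'a set \<Rightarrow> ('a \<times> 'a) set \<Rightarrow> 'a \<Rightarrow> 'a \<Rightarrow> 'a set \<Rightarrow> bool" where
  "d_connected V E a b Z \<longleftrightarrow> a \<noteq> b \<and>
     (\<exists>p. is_path V E a b p \<and>
        (\<forall>i. 0 < i \<and> Suc i < length p \<longrightarrow>
           (if is_collider E p i then (\<exists>d \<in> Z. (p ! i, d) \<in> E\<^sup>*)
            else p ! i \<notin> Z)))"

definition d_separated :: "'a set \<Rightarrow> ('a \<times> 'a) set \<Rightarrow> 'a \<Rightarrow> 'a \<Rightarrow> 'a set \<Rightarrow> bool" where
  "d_separated V E a b Z \<longleftrightarrow> \<not> d_connected V E a b Z"

definition markov_equiv :: "'a set \<Rightarrow> ('a \<times> 'a) set \<Rightarrow> ('a \<times> 'a) set \<Rightarrow> bool" where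
  "markov_equiv V E1 E2 \<longleftrightarrow>
     (\<forall>a b Z. a \<in> V \<and> b \<in> V \<and> a \<noteq> b \<and> Z \<subseteq> V - {a, b} \<longrightarrow>
        (d_separated V E1 a b Z \<longleftrightarrow> d_separated V E2 a b Z))"

definition MEC :: "'a set \<Rightarrow> ('a \<times> 'a) set \<Rightarrow> ('a \<times> 'a) set set" where
  "MEC V E = {E'. is_dag V E' \<and> markov_equiv V E E'}"

definition reverse_edge :: "('a \<times> 'a) set \<Rightarrow> 'a \<Rightarrow> 'a \<Rightarrow> ('a \<times> 'a) set" where
  "reverse_edge E v w = insert (w, v) (E - {(v, w)})"

definition reversible :: "'a set \<Rightarrow> ('a \<times> 'a) set \<Rightarrow> 'a \<Rightarrow> 'a \<Rightarrow> bool" where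
  "reversible V E v w \<longleftrightarrow> (v, w) \<in> E \<and> is_dag V (reverse_edge E v w) \<and>
     markov_equiv V E (reverse_edge E v w)"

definition edge_matching :: "('a \<times> 'a) set \<Rightarrow> bool" where
  "edge_matching S \<longleftrightarrow> (\<forall>e \<in> S. \<forall>f \<in> S. e \<noteq> f \<longrightarrow> {fst e, snd e} \<inter> {fst f, snd f} = {})"

end

(*
  A reversible edge v \<rightarrow> w is covered: the parents of w are v and the parents of v (Chickering).
  Otherwise some u is a parent of exactly one of v, w, and before or after the reversal the
  non-adjacent vertices u and w (resp. u and v) are joined by a chain through the other endpoint;
  the parents of one of them d-separate them in one graph but leave the chain open in the other.
  Conversely, reversing a covered edge preserves d-connection: on a d-connecting path a collider
  at v is rerouted through w, and where the path uses the edge itself, v or w is skipped.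
  Reversing some edges of a matching leaves the parents of the endpoints of the other edges
  unchanged, so the edges of any subset of S can be reversed one after the other, and the
  2^|S| graphs obtained are distinct members of MEC(G).
*)

theory Submission
  imports Defs
begin

section \<open>Active walks\<close>

abbreviation adjacent :: "('a \<times> 'a) set \<Rightarrow> 'a \<Rightarrow> 'a \<Rightarrow> bool" where
  "adjacent E x y \<equiv> (x, y) \<in> E \<or> (y, x) \<in> E"

abbreviation collider :: "('a \<times> 'a) set \<Rightarrow> 'a \<Rightarrow> 'a \<Rightarrow> 'a \<Rightarrow> bool" where
  "collider E a x b \<equiv> (a, x) \<in> E \<and> (b, x) \<in> E"

definition active_triple :: "('a \<times> 'a) set \<Rightarrow> 'a set \<Rightarrow> 'a \<Rightarrow> 'a \<Rightarrow> 'a \<Rightarrow> bool" where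
  "active_triple E Z a x b \<longleftrightarrow>
     (if collider E a x b then \<exists>d \<in> Z. (x, d) \<in> E\<^sup>* else x \<notin> Z)"

lemma active_triple_collider [simp]:
  "collider E a x b \<Longrightarrow> active_triple E Z a x b \<longleftrightarrow> (\<exists>d \<in> Z. (x, d) \<in> E\<^sup>*)"
  unfolding active_triple_def by auto

lemma active_triple_noncollider [simp]:
  "\<not> collider E a x b \<Longrightarrow> active_triple E Z a x b \<longleftrightarrow> x \<notin> Z"
  unfolding active_triple_def by auto

lemma active_triple_commute: "active_triple E Z a x b \<longleftrightarrow> active_triple E Z b x a"
  unfolding active_triple_def by auto

(* Unlike the paths of d_connected, walks may revisit vertices, so that a d-connecting path can be
   rerouted locally; active_walk_remove_cycles removes the repetitions again. *)

fun active_walk :: "('a \<times> 'a) set \<Rightarrow> 'a set \<Rightarrow> 'a list \<Rightarrow> bool" where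
  "active_walk E Z [a, b] \<longleftrightarrow> adjacent E a b"
| "active_walk E Z (a # x # b # p) \<longleftrightarrow>
     adjacent E a x \<and> active_triple E Z a x b \<and> active_walk E Z (x # b # p)"
| "active_walk E Z _ \<longleftrightarrow> False"

lemma active_walk_length: "active_walk E Z p \<Longrightarrow> 2 \<le> length p"
  by (induction E Z p rule: active_walk.induct) auto

lemma active_walk_adjacent: "active_walk E Z (a # b # p) \<Longrightarrow> adjacent E a b"
  by (cases p) auto

lemma active_walk_ConsD: "active_walk E Z (x # p) \<Longrightarrow> 2 \<le> length p \<Longrightarrow> active_walk E Z p"
  by (cases p; cases "tl p") auto

lemma active_walk_adjacent_last: "active_walk E Z (xs @ [a, b]) \<Longrightarrow> adjacent E a b"
proof (induction xs)
  case (Cons x xs)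
  then show ?case using active_walk_ConsD[of E Z x "xs @ [a, b]"] by simp
qed simp

lemma active_walk_split_at_edge:
  "active_walk E Z (xs @ a # b # ys) \<longleftrightarrow> active_walk E Z (xs @ [a, b]) \<and> active_walk E Z (a # b # ys)"
proof (induction xs rule: induct_list012)
  case 1
  then show ?case by (cases ys) auto
next
  case (2 x)
  then show ?case by (cases ys) auto
next
  case (3 x y zs)
  then show ?case by (cases zs) auto
qed

lemma active_walk_split_at_vertex:
  "active_walk E Z (xs @ a # x # b # ys) \<longleftrightarrow>
     active_walk E Z (xs @ [a, x]) \<and> active_triple E Z a x b \<and> active_walk E Z (x # b # ys)"
proof -
  have "active_walk E Z (xs @ a # x # b # ys) \<longleftrightarrow>
      active_walk E Z ((xs @ [a]) @ [x, b]) \<and> active_walk E Z (x # b # ys)"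
    using active_walk_split_at_edge[of E Z "xs @ [a]" x b ys] by simp
  also have "active_walk E Z ((xs @ [a]) @ [x, b]) \<longleftrightarrow>
      active_walk E Z (xs @ [a, x]) \<and> active_walk E Z [a, x, b]"
    using active_walk_split_at_edge[of E Z xs a x "[b]"] by simp
  finally show ?thesis
    using active_walk_adjacent[of E Z x b ys] active_walk_adjacent_last[of E Z xs a x] by auto
qed

lemma active_walk_appendD1:
  assumes "active_walk E Z (xs @ ys)" and "2 \<le> length xs"
  shows "active_walk E Z xs"
proof -
  obtain us c d where "xs = us @ [c, d]"
    using assms(2) by (cases xs rule: rev_cases; cases "butlast xs" rule: rev_cases) auto
  with assms(1) show ?thesis
    using active_walk_split_at_edge[of E Z us c d ys] by simp
qed

lemma active_walk_appendD2:
  assumes "active_walk E Z (xs @ ys)" and "2 \<le> length ys"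
  shows "active_walk E Z ys"
proof -
  obtain c d r where "ys = c # d # r"
    using assms(2) by (cases ys; cases "tl ys") auto
  with assms(1) show ?thesis
    using active_walk_split_at_edge[of E Z xs c d r] by simp
qed

lemma active_walk_rev [simp]: "active_walk E Z (rev p) \<longleftrightarrow> active_walk E Z p"
proof -
  have "active_walk E Z (rev p)" if "active_walk E Z p" for p
    using that
  proof (induction E Z p rule: active_walk.induct)
    case (2 E Z a x b p)
    then have "active_walk E Z (rev p @ [b, x])" "active_triple E Z b x a"
      by (simp_all add: active_triple_commute)
    with "2.prems" show ?case
      using active_walk_split_at_vertex[of E Z "rev p" b x a "[]"] by auto
  qed auto
  from this[of p] this[of "rev p"] show ?thesis by auto
qed

lemma active_walk_replace_last:
  assumes "active_walk E Z (xs @ [a, x])" and "adjacent E a y" and "(x, a) \<in> E \<longleftrightarrow> (y, a) \<in> E"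
  shows "active_walk E Z (xs @ [a, y])"
proof (cases xs rule: rev_cases)
  case Nil
  with assms show ?thesis by simp
next
  case (snoc ys c)
  with assms have "active_walk E Z (ys @ [c, a])" "active_triple E Z c a x"
    using active_walk_split_at_vertex[of E Z ys c a x "[]"] by auto
  with assms snoc show ?thesis
    using active_walk_split_at_vertex[of E Z ys c a y "[]"] by (auto simp: active_triple_def)
qed

lemma active_walk_replace_hd:
  assumes "active_walk E Z (x # a # xs)" and "adjacent E a y" and "(x, a) \<in> E \<longleftrightarrow> (y, a) \<in> E"
  shows "active_walk E Z (y # a # xs)"
proof -
  have "active_walk E Z (rev xs @ [a, x])"
    using assms(1) active_walk_rev[of E Z "x # a # xs"] by simp
  then have "active_walk E Z (rev xs @ [a, y])"
    using assms(2,3) by (rule active_walk_replace_last)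
  then show ?thesis
    using active_walk_rev[of E Z "y # a # xs"] by simp
qed

lemma active_walk_iff_nth:
  "active_walk E Z p \<longleftrightarrow> 2 \<le> length p \<and>
     (\<forall>i. Suc i < length p \<longrightarrow> adjacent E (p ! i) (p ! Suc i)) \<and>
     (\<forall>i. 0 < i \<and> Suc i < length p \<longrightarrow> active_triple E Z (p ! (i - 1)) (p ! i) (p ! Suc i))"
proof (induction E Z p rule: active_walk.induct)
  case (1 E Z a b)
  have "i = 0" if "Suc i < 2" for i using that by simp
  then show ?case by auto
next
  case (2 E Z a x b p)
  have split: "(\<forall>i::nat. P i) \<longleftrightarrow> P 0 \<and> (\<forall>i. P (Suc i))" for P
    by (metis not0_implies_Suc)
  have "(\<forall>i. 0 < i \<and> Suc i < length (a # x # b # p) \<longrightarrow>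
      active_triple E Z ((a # x # b # p) ! (i - 1)) ((a # x # b # p) ! i) ((a # x # b # p) ! Suc i))
    \<longleftrightarrow> active_triple E Z a x b \<and>
      (\<forall>i. 0 < i \<and> Suc i < length (x # b # p) \<longrightarrow>
        active_triple E Z ((x # b # p) ! (i - 1)) ((x # b # p) ! i) ((x # b # p) ! Suc i))"
    by (subst split, subst (2) split) (auto simp: less_Suc_eq_0_disj)
  then show ?case
    using "2.IH" by (subst split) auto
qed auto

lemma active_walk_set: "active_walk E Z p \<Longrightarrow> set p \<subseteq> Field E"
  by (induction E Z p rule: active_walk.induct) (auto intro: FieldI1 FieldI2)

lemma d_connected_iff_active_path:
  assumes "E \<subseteq> V \<times> V"
  shows "d_connected V E a b Z \<longleftrightarrow>
    a \<noteq> b \<and> (\<exists>p. active_walk E Z p \<and> distinct p \<and> hd p = a \<and> last p = b)"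
proof -
  have "is_path V E a b p \<and>
      (\<forall>i. 0 < i \<and> Suc i < length p \<longrightarrow>
         (if is_collider E p i then \<exists>d \<in> Z. (p ! i, d) \<in> E\<^sup>* else p ! i \<notin> Z))
    \<longleftrightarrow> active_walk E Z p \<and> distinct p \<and> hd p = a \<and> last p = b" (is "?path \<longleftrightarrow> ?walk") for p
  proof
    assume ?path
    then show ?walk
      unfolding is_path_def is_collider_def active_walk_iff_nth active_triple_def by auto
  next
    assume ?walk
    moreover from this have "set p \<subseteq> V"
      using active_walk_set[of E Z p] assms by (auto simp: Field_def)
    ultimately show ?path
      unfolding is_path_def is_collider_def active_walk_iff_nth active_triple_def by auto
  qed
  then show ?thesis
    unfolding d_connected_def by auto
qed

lemma active_walk_forward_trancl:
  assumes "active_walk E Z (a # x # p)" and "(a, x) \<in> E" and "\<forall>z \<in> Z. (a, z) \<notin> E\<^sup>*"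
  shows "(a, last (x # p)) \<in> E\<^sup>+"
  using assms
proof (induction p arbitrary: a x)
  case (Cons b p)
  have "(b, x) \<notin> E"
  proof
    assume "(b, x) \<in> E"
    with Cons.prems obtain d where "d \<in> Z" "(x, d) \<in> E\<^sup>*" by auto
    with Cons.prems show False by (meson converse_rtrancl_into_rtrancl)
  qed
  with Cons.prems have "active_walk E Z (x # b # p)" "(x, b) \<in> E"
    using active_walk_adjacent[of E Z x b p] by auto
  moreover have "\<forall>z \<in> Z. (x, z) \<notin> E\<^sup>*"
    using Cons.prems by (meson converse_rtrancl_into_rtrancl)
  ultimately have "(x, last (b # p)) \<in> E\<^sup>+" by (rule Cons.IH)
  with Cons.prems show ?case by (simp add: trancl_into_trancl2)
qed auto

lemma active_walk_loop_descendant: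
  assumes "acyclic E" and "active_walk E Z (x # y # p)" and "last (y # p) = x" and "(x, y) \<in> E"
  shows "\<exists>d \<in> Z. (x, d) \<in> E\<^sup>*"
  using active_walk_forward_trancl[OF assms(2,4)] assms(1,3) by (auto simp: acyclic_def)

(* If x is a collider of the shortcut but not of its first visit, the loop between the two visits
   leaves x along an out-edge; without a descendant of x in Z it would have to follow edge directions
   all the way back to x (active_walk_forward_trancl), closing a cycle. *)

lemma active_triple_shortcut:
  assumes "acyclic E" and "active_walk E Z (a # x # ys @ [x, b])"
  shows "active_triple E Z a x b"
proof -
  obtain c r where cr: "ys @ [x] = c # r" by (cases "ys @ [x]") auto
  have "active_walk E Z (a # x # c # r @ [b])"
    using assms(2) cr by (metis append.assoc append_Cons append_Nil)
  then have first: "active_triple E Z a x c" and loop: "active_walk E Z (x # c # r)"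
    using active_walk_appendD1[of E Z "x # c # r" "[b]"] by simp_all
  obtain us d where ud: "x # ys = us @ [d]" by (cases "x # ys" rule: rev_cases) auto
  then have "active_walk E Z ((a # us) @ d # x # b # [])"
    using assms(2) by (metis append.assoc append_Cons append_Nil)
  then have second: "active_triple E Z d x b"
    using active_walk_split_at_vertex[of E Z "a # us" d x b "[]"] by blast
  show ?thesis
  proof (cases "collider E a x b")
    case True
    then show ?thesis
    proof (cases "(c, x) \<in> E")
      case False
      then have "(x, c) \<in> E" using active_walk_adjacent[OF loop] by simp
      moreover have "last (c # r) = x" using cr by (metis last_snoc)
      ultimately show ?thesis
        using True active_walk_loop_descendant[OF assms(1) loop] by simp
    qed (use first in simp)
  next
    case False
    then show ?thesis
      using first second by (cases "(a, x) \<in> E") (auto simp: active_triple_def split: if_splits)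
  qed
qed

lemma active_walk_shortcut:
  assumes "acyclic E" and "active_walk E Z (xs @ x # ys @ x # zs)" and "xs \<noteq> [] \<or> zs \<noteq> []"
  shows "active_walk E Z (xs @ x # zs)"
proof (cases "xs = []")
  case True
  with assms(3) have "2 \<le> length (x # zs)" by (cases zs) auto
  with assms(2) True show ?thesis
    using active_walk_appendD2[of E Z "x # ys" "x # zs"] by simp
next
  case xs: False
  then obtain us a where us: "xs = us @ [a]" by (cases xs rule: rev_cases) auto
  have left: "active_walk E Z (us @ [a, x])"
    using assms(2) us active_walk_appendD1[of E Z "us @ [a, x]" "ys @ x # zs"] by simp
  show ?thesis
  proof (cases zs)
    case Nil
    with left us show ?thesis by simp
  next
    case (Cons b vs)
    have right: "active_walk E Z (x # b # vs)"
      using assms(2) Cons active_walk_appendD2[of E Z "xs @ x # ys" "x # b # vs"] by simp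
    have "active_walk E Z (a # x # ys @ [x, b])"
      using assms(2) us Cons active_walk_appendD1[of E Z "a # x # ys @ [x, b]" vs]
        active_walk_appendD2[of E Z us "a # x # ys @ x # b # vs"] by simp
    then have "active_triple E Z a x b"
      by (rule active_triple_shortcut[OF assms(1)])
    with left right us Cons show ?thesis
      using active_walk_split_at_vertex[of E Z us a x b vs] by simp
  qed
qed

lemma active_walk_remove_cycles:
  assumes "acyclic E" and "active_walk E Z p" and "hd p \<noteq> last p"
  shows "\<exists>q. active_walk E Z q \<and> distinct q \<and> hd q = hd p \<and> last q = last p"
  using assms(2,3)
proof (induction "length p" arbitrary: p rule: less_induct)
  case less
  show ?case
  proof (cases "distinct p")
    case False
    then obtain xs x ys zs where p: "p = xs @ x # ys @ x # zs"
      using not_distinct_decomp[of p] by auto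
    have hd_eq: "hd (xs @ x # zs) = hd p" using p by (cases xs) simp_all
    have last_eq: "last (xs @ x # zs) = last p" using p by (cases zs) simp_all
    have "xs \<noteq> [] \<or> zs \<noteq> []"
      using less.prems(2) p by auto
    moreover have "active_walk E Z (xs @ x # ys @ x # zs)"
      using less.prems(1) p by simp
    ultimately have "active_walk E Z (xs @ x # zs)"
      using active_walk_shortcut[OF assms(1)] by blast
    moreover have "length (xs @ x # zs) < length p" using p by simp
    moreover have "hd (xs @ x # zs) \<noteq> last (xs @ x # zs)"
      using hd_eq last_eq less.prems(2) by simp
    ultimately show ?thesis
      using less.hyps[of "xs @ x # zs"] hd_eq last_eq by simp
  qed (use less.prems in blast)
qed

lemma d_connected_iff_active_walk:
  assumes "acyclic E" and "E \<subseteq> V \<times> V"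
  shows "d_connected V E a b Z \<longleftrightarrow> a \<noteq> b \<and> (\<exists>p. active_walk E Z p \<and> hd p = a \<and> last p = b)"
proof -
  have "(\<exists>p. active_walk E Z p \<and> distinct p \<and> hd p = a \<and> last p = b) \<longleftrightarrow>
      (\<exists>p. active_walk E Z p \<and> hd p = a \<and> last p = b)" if "a \<noteq> b"
  proof
    assume "\<exists>p. active_walk E Z p \<and> hd p = a \<and> last p = b"
    then obtain p where "active_walk E Z p" "hd p = a" "last p = b" by blast
    with that show "\<exists>p. active_walk E Z p \<and> distinct p \<and> hd p = a \<and> last p = b"
      using active_walk_remove_cycles[OF assms(1), of Z p] by auto
  qed blast
  then show ?thesis
    unfolding d_connected_iff_active_path[OF assms(2)] by blast
qed

lemma d_connected_commute:
  assumes "acyclic E" and "E \<subseteq> V \<times> V"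
  shows "d_connected V E a b Z \<longleftrightarrow> d_connected V E b a Z"
proof -
  have "d_connected V E b a Z" if conn: "d_connected V E a b Z" for a b
  proof -
    obtain p where p: "a \<noteq> b" "active_walk E Z p" "hd p = a" "last p = b"
      using conn unfolding d_connected_iff_active_walk[OF assms] by blast
    then have "p \<noteq> []" using active_walk_length[of E Z p] by auto
    with p have "active_walk E Z (rev p)" "hd (rev p) = b" "last (rev p) = a"
      by (simp_all add: hd_rev last_rev)
    with p(1) show ?thesis
      unfolding d_connected_iff_active_walk[OF assms] by blast
  qed
  then show ?thesis by blast
qed

section \<open>Chains and local separation\<close>

lemma acyclic_asym: "acyclic E \<Longrightarrow> (a, b) \<in> E \<Longrightarrow> (b, a) \<notin> E"
  by (meson acyclic_def r_into_trancl' trancl_into_trancl)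

definition parents :: "('a \<times> 'a) set \<Rightarrow> 'a \<Rightarrow> 'a set" where
  "parents E x = {u. (u, x) \<in> E}"

lemma d_connected_chain:
  assumes "acyclic E" and "E \<subseteq> V \<times> V" and "(a, m) \<in> E" "(m, b) \<in> E" and "a \<noteq> b" and "m \<notin> Z"
  shows "d_connected V E a b Z"
proof -
  have "(b, m) \<notin> E"
    using acyclic_asym[OF assms(1,4)] .
  with assms(3-6) have "active_walk E Z [a, m, b]" by simp
  with assms(5) show ?thesis
    unfolding d_connected_iff_active_walk[OF assms(1,2)] by fastforce
qed

lemma parents_d_separate:
  assumes "acyclic E" and "E \<subseteq> V \<times> V" and "(y, x) \<notin> E" and "(x, y) \<notin> E\<^sup>*"
  shows "\<not> d_connected V E x y (parents E x)"
proof
  assume "d_connected V E x y (parents E x)"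
  then obtain p where walk: "active_walk E (parents E x) p" and ends: "hd p = x" "last p = y"
    unfolding d_connected_iff_active_walk[OF assms(1,2)] by blast
  then obtain u r where p: "p = x # u # r"
    using active_walk_length[OF walk] by (cases p; cases "tl p") auto
  have "(x, u) \<in> E"
  proof (rule ccontr)
    assume xu: "(x, u) \<notin> E"
    with walk p have ux: "(u, x) \<in> E"
      using active_walk_adjacent[of E _ x u r] by auto
    show False
    proof (cases r)
      case Nil
      with ends p ux assms(3) show False by simp
    next
      case (Cons b r')
      with walk p xu have "u \<notin> parents E x" by simp
      with ux show False by (simp add: parents_def)
    qed
  qed
  moreover have "\<forall>z \<in> parents E x. (x, z) \<notin> E\<^sup>*"
    using assms(1) by (auto simp: parents_def acyclic_def dest: rtrancl_into_trancl1)
  ultimately have "(x, last (u # r)) \<in> E\<^sup>+"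
    using active_walk_forward_trancl[of E "parents E x" x u r] walk p by simp
  with ends p assms(4) show False by (simp add: trancl_into_rtrancl)
qed

lemma markov_equiv_sym: "markov_equiv V G H \<longleftrightarrow> markov_equiv V H G"
  unfolding markov_equiv_def by (simp add: eq_commute)

lemma markov_equiv_parents_d_separate:
  assumes "markov_equiv V G H" and H: "is_dag V H"
    and "x \<in> V" "y \<in> V" "x \<noteq> y" and "\<not> adjacent H x y" and "(x, y) \<notin> H\<^sup>*"
  shows "\<not> d_connected V G x y (parents H x)"
proof -
  have acyclic: "acyclic H" and sub: "H \<subseteq> V \<times> V" using H by (simp_all add: is_dag_def)
  have "parents H x \<subseteq> V - {x, y}"
    using sub acyclic assms(6) by (auto simp: parents_def acyclic_def)
  with assms(1,3-5) have "d_separated V G x y (parents H x) \<longleftrightarrow> d_separated V H x y (parents H x)"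
    unfolding markov_equiv_def by blast
  with parents_d_separate[OF acyclic sub] assms(6,7) show ?thesis
    unfolding d_separated_def by blast
qed

text \<open>The parents of whichever of \<open>a\<close>, \<open>b\<close> is not an ancestor of the other d-separate them
  in \<open>H\<close>, but do not block the chain \<open>a \<rightarrow> m \<rightarrow> b\<close> in \<open>G\<close>.\<close>

lemma chain_not_markov_equiv:
  assumes G: "is_dag V G" and H: "is_dag V H"
    and am: "(a, m) \<in> G" and mb: "(m, b) \<in> G" and "a \<noteq> b"
    and "\<not> adjacent H a b" and "(m, a) \<notin> H" "(m, b) \<notin> H"
  shows "\<not> markov_equiv V G H"
proof
  assume equiv: "markov_equiv V G H"
  have acyclic: "acyclic G" "acyclic H" and sub: "G \<subseteq> V \<times> V"
    using G H by (simp_all add: is_dag_def)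
  have V: "a \<in> V" "b \<in> V" using am mb sub by auto
  have conn: "d_connected V G a b Z" "d_connected V G b a Z" if "m \<notin> Z" for Z
    using d_connected_chain[OF acyclic(1) sub am mb \<open>a \<noteq> b\<close> that]
      d_connected_commute[OF acyclic(1) sub] by blast+
  have "(a, b) \<notin> H\<^sup>* \<or> (b, a) \<notin> H\<^sup>*"
    using acyclic_impl_antisym_rtrancl[OF acyclic(2)] \<open>a \<noteq> b\<close> by (auto dest: antisymD)
  then show False
  proof
    assume "(a, b) \<notin> H\<^sup>*"
    with equiv H V assms(5,6) have "\<not> d_connected V G a b (parents H a)"
      by (intro markov_equiv_parents_d_separate) auto
    with conn(1) assms(7) show False by (simp add: parents_def)
  next
    assume "(b, a) \<notin> H\<^sup>*"
    with equiv H V assms(5,6) have "\<not> d_connected V G b a (parents H b)"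
      by (intro markov_equiv_parents_d_separate) auto
    with conn(2) assms(8) show False by (simp add: parents_def)
  qed
qed

lemma markov_equiv_trans: "markov_equiv V A B \<Longrightarrow> markov_equiv V B C \<Longrightarrow> markov_equiv V A C"
  unfolding markov_equiv_def by (simp (no_asm_simp))

section \<open>Covered edges\<close>

lemma mem_reverse_edge_iff:
  "(x, y) \<in> reverse_edge E v w \<longleftrightarrow> (x, y) \<in> E \<and> (x, y) \<noteq> (v, w) \<or> (x, y) = (w, v)"
  by (auto simp: reverse_edge_def)

definition covered :: "('a \<times> 'a) set \<Rightarrow> 'a \<Rightarrow> 'a \<Rightarrow> bool" where
  "covered E v w \<longleftrightarrow> (v, w) \<in> E \<and> parents E w = insert v (parents E v)"

lemma reversible_imp_covered:
  assumes dag: "is_dag V E" and "reversible V E v w"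
  shows "covered E v w"
proof -
  let ?E' = "reverse_edge E v w"
  have vw: "(v, w) \<in> E" and dag': "is_dag V ?E'" and equiv: "markov_equiv V E ?E'"
    using assms(2) by (simp_all add: reversible_def)
  have acyclic: "acyclic E" "acyclic ?E'" using dag dag' by (simp_all add: is_dag_def)
  have "v \<noteq> w" using acyclic_asym[OF acyclic(1) vw] vw by auto
  have "(u, w) \<in> E" if uv: "(u, v) \<in> E" for u
  proof (rule ccontr)
    assume uw: "(u, w) \<notin> E"
    have "(u, w) \<in> E\<^sup>+" using uv vw by auto
    then have "(w, u) \<notin> E" using acyclic(1) by (meson acyclic_def trancl_into_trancl)
    moreover have "u \<noteq> v" "u \<noteq> w" using uv vw acyclic_asym[OF acyclic(1)] by auto
    ultimately have "\<not> markov_equiv V E ?E'"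
      using uw uv acyclic_asym[OF acyclic(1) uv] \<open>v \<noteq> w\<close>
      by (intro chain_not_markov_equiv[OF dag dag' uv vw]) (auto simp: mem_reverse_edge_iff)
    with equiv show False by blast
  qed
  moreover have "(u, v) \<in> E" if uw: "(u, w) \<in> E" and "u \<noteq> v" for u
  proof (rule ccontr)
    assume uv: "(u, v) \<notin> E"
    have "u \<noteq> w" using uw acyclic_asym[OF acyclic(1)] by auto
    have uw': "(u, w) \<in> ?E'" and wv': "(w, v) \<in> ?E'" using uw \<open>u \<noteq> v\<close> by (auto simp: mem_reverse_edge_iff)
    have "(v, u) \<notin> E"
    proof
      assume "(v, u) \<in> E"
      with \<open>u \<noteq> w\<close> have "(v, u) \<in> ?E'" by (simp add: mem_reverse_edge_iff)
      with uw' wv' have "(v, v) \<in> ?E'\<^sup>+" by (meson trancl_into_trancl r_into_trancl')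
      with acyclic(2) show False by (simp add: acyclic_def)
    qed
    with uv \<open>u \<noteq> v\<close> have "\<not> markov_equiv V ?E' E"
      using acyclic_asym[OF acyclic(1) uw] acyclic_asym[OF acyclic(1) vw]
      by (intro chain_not_markov_equiv[OF dag' dag uw' wv']) auto
    with equiv show False by (simp add: markov_equiv_sym)
  qed
  ultimately show ?thesis
    using vw by (auto simp: covered_def parents_def)
qed

locale covered_edge =
  fixes E :: "('a \<times> 'a) set" and v w :: 'a
  assumes acyclic: "acyclic E" and covered: "covered E v w"
begin

abbreviation E' :: "('a \<times> 'a) set" where
  "E' \<equiv> reverse_edge E v w"

lemma edge: "(v, w) \<in> E"
  using covered by (simp add: covered_def)

lemma parent_w_iff: "(u, w) \<in> E \<longleftrightarrow> u = v \<or> (u, v) \<in> E"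
  using covered by (auto simp: covered_def parents_def)

lemma v_neq_w: "v \<noteq> w"
  using acyclic_asym[OF acyclic edge] edge by auto

lemma acyclic_reversed: "acyclic E'"
proof -
  let ?F = "E - {(v, w)}"
  have "(v, w) \<notin> ?F\<^sup>*"
  proof
    assume "(v, w) \<in> ?F\<^sup>*"
    then obtain u where vu: "(v, u) \<in> ?F\<^sup>*" and uw: "(u, w) \<in> ?F"
      using v_neq_w by (auto elim: rtranclE)
    then have "(u, v) \<in> E" using parent_w_iff by auto
    moreover have "(v, u) \<in> E\<^sup>*" using vu rtrancl_mono[of ?F E] by blast
    ultimately have "(v, v) \<in> E\<^sup>+" by (simp add: rtrancl_into_trancl1)
    with acyclic show False by (simp add: acyclic_def)
  qed
  moreover have "acyclic ?F" using acyclic acyclic_subset by blast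
  ultimately show ?thesis by (simp add: reverse_edge_def)
qed

lemma covered_reversed: "covered E' w v"
  using parent_w_iff v_neq_w acyclic_asym[OF acyclic]
  unfolding covered_def parents_def reverse_edge_def by auto

lemma reverse_edge_reversed: "reverse_edge E' w v = E"
  using edge acyclic_asym[OF acyclic edge] by (auto simp: reverse_edge_def)

lemma rtrancl_reversed: "(x, d) \<in> E\<^sup>* \<Longrightarrow> (x, d) \<in> E'\<^sup>* \<or> x = v \<and> (w, d) \<in> E'\<^sup>*"
proof (induction rule: converse_rtrancl_induct)
  case (step x y)
  show ?case
  proof (cases "(x, y) = (v, w)")
    case True
    with step.IH show ?thesis by auto
  next
    case False
    with step.hyps(1) have xy: "(x, y) \<in> E'" by (simp add: mem_reverse_edge_iff)
    from step.IH show ?thesis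
    proof
      assume "(y, d) \<in> E'\<^sup>*"
      with xy show ?thesis by (meson converse_rtrancl_into_rtrancl)
    next
      assume yv: "y = v \<and> (w, d) \<in> E'\<^sup>*"
      with step.hyps(1) have "(x, w) \<in> E'" "x \<noteq> v"
        using parent_w_iff acyclic_asym[OF acyclic] by (auto simp: mem_reverse_edge_iff)
      with yv show ?thesis by (meson converse_rtrancl_into_rtrancl)
    qed
  qed
qed simp

lemma descendant_reversed: "(x, d) \<in> E\<^sup>* \<Longrightarrow> x \<noteq> v \<Longrightarrow> (x, d) \<in> E'\<^sup>*"
  using rtrancl_reversed by blast

lemma descendant_of_v_reversed: "(v, d) \<in> E\<^sup>* \<Longrightarrow> (w, d) \<in> E'\<^sup>*"
  using rtrancl_reversed[of v d] mem_reverse_edge_iff[of w v E v w]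
  by (meson converse_rtrancl_into_rtrancl)

lemma active_triple_reversed:
  assumes "active_triple E Z a x b" and "x \<noteq> v" and "(a, x) \<noteq> (v, w)" "(b, x) \<noteq> (v, w)"
  shows "active_triple E' Z a x b"
proof -
  have same: "(a, x) \<in> E' \<longleftrightarrow> (a, x) \<in> E" "(b, x) \<in> E' \<longleftrightarrow> (b, x) \<in> E"
    using assms(2-4) by (auto simp: mem_reverse_edge_iff)
  show ?thesis
  proof (cases "collider E a x b")
    case True
    with assms(1) obtain d where "d \<in> Z" "(x, d) \<in> E\<^sup>*" by auto
    with True same assms(2) show ?thesis
      using descendant_reversed by auto
  next
    case False
    with assms(1) same show ?thesis by auto
  qed
qed

lemma active_walk_reversed_avoiding: "active_walk E Z p \<Longrightarrow> v \<notin> set p \<Longrightarrow> active_walk E' Z p"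
proof (induction p rule: induct_list012)
  case (3 a x p)
  show ?case
  proof (cases p)
    case Nil
    with "3.prems" show ?thesis by (auto simp: mem_reverse_edge_iff)
  next
    case (Cons b q)
    with "3.prems" "3.IH"(2) show ?thesis
      using active_triple_reversed[of Z a x b] by (auto simp: mem_reverse_edge_iff)
  qed
qed simp_all

lemma active_walk_reversed_ending_at_v:
  assumes "active_walk E Z (xs @ [x, v])" and "v \<notin> set (xs @ [x])" and "x \<noteq> w"
  shows "active_walk E' Z (xs @ [x, v])"
proof (cases xs rule: rev_cases)
  case Nil
  with assms show ?thesis by (auto simp: mem_reverse_edge_iff)
next
  case (snoc us c)
  with assms(1) have "active_walk E Z (us @ [c, x])" "active_triple E Z c x v" "adjacent E x v"
    using active_walk_split_at_vertex[of E Z us c x v "[]"] by auto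
  with assms(2,3) snoc show ?thesis
    using active_walk_split_at_vertex[of E' Z us c x v "[]"] active_walk_reversed_avoiding[of Z "us @ [c, x]"]
      active_triple_reversed[of Z c x v] by (auto simp: mem_reverse_edge_iff)
qed

lemma active_walk_reversed_starting_at_v:
  assumes "active_walk E Z (v # x # xs)" and "v \<notin> set (x # xs)" and "x \<noteq> w"
  shows "active_walk E' Z (v # x # xs)"
proof -
  have "active_walk E Z (rev xs @ [x, v])"
    using assms(1) active_walk_rev[of E Z "v # x # xs"] by simp
  with assms(2,3) have "active_walk E' Z (rev xs @ [x, v])"
    by (intro active_walk_reversed_ending_at_v) auto
  then show ?thesis
    using active_walk_rev[of E' Z "v # x # xs"] by simp
qed

lemma active_walk_reversed_reroute_collider:
  assumes "active_walk E' Z (us @ [a, v])" and "active_walk E' Z (v # b # zs)"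
    and "collider E a v b" and "active_triple E Z a v b"
  shows "active_walk E' Z (us @ a # w # b # zs)"
proof -
  have "a \<noteq> v" "b \<noteq> v" "a \<noteq> w" "b \<noteq> w"
    using assms(3) acyclic_asym[OF acyclic] parent_w_iff by auto
  then have into_w: "(a, w) \<in> E'" "(b, w) \<in> E'" and out_of_v: "(v, a) \<notin> E'" "(v, b) \<notin> E'"
    and out_of_w: "(w, a) \<notin> E'" "(w, b) \<notin> E'"
    using assms(3) parent_w_iff acyclic_asym[OF acyclic] by (auto simp: mem_reverse_edge_iff)
  have "active_walk E' Z (us @ [a, w])"
    using active_walk_replace_last[OF assms(1)] into_w(1) out_of_v(1) out_of_w(1) by blast
  moreover have "active_walk E' Z (w # b # zs)"
    using active_walk_replace_hd[OF assms(2)] into_w(2) out_of_v(2) out_of_w(2) by blast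
  moreover obtain d where "d \<in> Z" "(v, d) \<in> E\<^sup>*" using assms(3,4) by auto
  then have "active_triple E' Z a w b"
    using into_w descendant_of_v_reversed by auto
  ultimately show ?thesis
    using active_walk_split_at_vertex[of E' Z us a w b zs] by blast
qed

lemma active_walk_reversed_through_v:
  assumes walk: "active_walk E Z (xs @ v # ys)" and dist: "distinct (xs @ v # ys)"
    and "xs = [] \<or> last xs \<noteq> w" and "ys = [] \<or> hd ys \<noteq> w"
  shows "\<exists>q. active_walk E' Z q \<and> hd q = hd (xs @ v # ys) \<and> last q = last (xs @ v # ys)"
proof -
  have left: "active_walk E' Z (us @ [a, v])" if "xs = us @ [a]" for us a
    using active_walk_appendD1[of E Z "us @ [a, v]" ys] walk dist assms(3) that
    by (intro active_walk_reversed_ending_at_v) auto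
  have right: "active_walk E' Z (v # b # zs)" if "ys = b # zs" for b zs
    using active_walk_appendD2[of E Z xs "v # b # zs"] walk dist assms(4) that
    by (intro active_walk_reversed_starting_at_v) auto
  consider "xs = []" | "ys = []" | us a b zs where "xs = us @ [a]" "ys = b # zs"
    by (metis neq_Nil_conv rev_exhaust)
  then show ?thesis
  proof cases
    case 1
    with walk obtain b zs where "ys = b # zs"
      using active_walk_length[OF walk] by (cases ys) auto
    with 1 right show ?thesis by auto
  next
    case 2
    with walk obtain us a where "xs = us @ [a]"
      using active_walk_length[OF walk] by (cases xs rule: rev_cases) auto
    with 2 left show ?thesis by auto
  next
    case 3
    with walk have triple: "active_triple E Z a v b"
      using active_walk_split_at_vertex[of E Z us a v b zs] by simp
    show ?thesis
    proof (cases "collider E a v b")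
      case True
      have "active_walk E' Z (us @ a # w # b # zs)"
        using active_walk_reversed_reroute_collider[OF left[OF 3(1)] right[OF 3(2)] True triple] .
      moreover have "hd (us @ a # w # b # zs) = hd (xs @ v # ys)" using 3 by (cases us) auto
      moreover have "last (us @ a # w # b # zs) = last (xs @ v # ys)" using 3 by simp
      ultimately show ?thesis by blast
    next
      case False
      have "a \<noteq> w" "b \<noteq> w" using assms(3,4) 3 by auto
      with False triple have "active_triple E' Z a v b"
        by (auto simp: mem_reverse_edge_iff)
      with 3 left right show ?thesis
        using active_walk_split_at_vertex[of E' Z us a v b zs] by auto
    qed
  qed
qed

lemma active_walk_reversed_prefix_keep:
  assumes "active_walk E Z (xs @ [v, w])" and "v \<notin> set xs" "w \<notin> set xs"
    and "xs = [] \<or> (last xs, v) \<notin> E" and "(u, v) \<in> E'"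
  shows "active_walk E' Z (xs @ [v, u])"
proof (cases xs rule: rev_cases)
  case Nil
  with assms(5) show ?thesis by simp
next
  case (snoc us x)
  with assms(1) have "active_walk E Z (us @ [x, v])" "active_triple E Z x v w"
    using active_walk_split_at_vertex[of E Z us x v w "[]"] by auto
  moreover have "(x, v) \<notin> E" "(x, v) \<notin> E'"
    using assms(3,4) snoc by (auto simp: mem_reverse_edge_iff)
  ultimately have "active_walk E' Z (us @ [x, v])" "active_triple E' Z x v u"
    using assms(2,3) snoc active_walk_reversed_ending_at_v[of Z us x] by auto
  with snoc assms(5) show ?thesis
    using active_walk_split_at_vertex[of E' Z us x v u "[]"] by auto
qed

lemma active_walk_reversed_suffix:
  assumes "active_walk E Z (v # w # ys)" and "v \<notin> set ys" and "adjacent E' u w"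
    and "(u, w) \<in> E' \<or> ys = [] \<or> (hd ys, w) \<notin> E"
  shows "active_walk E' Z (u # w # ys)"
proof (cases ys)
  case Nil
  with assms(3) show ?thesis by simp
next
  case (Cons y zs)
  with assms(1) have triple: "active_triple E Z v w y" and rest: "active_walk E Z (w # y # zs)"
    by simp_all
  have "y \<noteq> v" using assms(2) Cons by auto
  then have yw: "(y, w) \<in> E' \<longleftrightarrow> (y, w) \<in> E" by (auto simp: mem_reverse_edge_iff)
  have "active_triple E' Z u w y"
  proof (cases "(y, w) \<in> E")
    case True
    with triple edge obtain d where "d \<in> Z" "(w, d) \<in> E\<^sup>*" by auto
    with True yw assms(4) Cons show ?thesis
      using descendant_reversed v_neq_w by auto
  next
    case False
    with triple yw show ?thesis by auto
  qed
  moreover have "active_walk E' Z (w # y # zs)"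
    using rest assms(2) Cons v_neq_w by (intro active_walk_reversed_avoiding) auto
  ultimately show ?thesis
    using assms(3) Cons by simp
qed

lemma active_walk_reversed_skip_v:
  assumes walk: "active_walk E Z (us @ x # v # w # ys)" and dist: "distinct (us @ x # v # w # ys)"
    and xv: "(x, v) \<in> E"
  shows "active_walk E' Z (us @ x # w # ys)"
proof -
  have "active_walk E Z (us @ [x, v])" and right: "active_walk E Z (v # w # ys)"
    using walk active_walk_split_at_vertex[of E Z us x v w ys] by simp_all
  with dist have "active_walk E' Z (us @ [x, v])"
    by (intro active_walk_reversed_ending_at_v) auto
  moreover have xw: "(x, w) \<in> E'" and "(v, x) \<notin> E'" "(w, x) \<notin> E'"
    using dist xv parent_w_iff acyclic_asym[OF acyclic] by (auto simp: mem_reverse_edge_iff)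
  ultimately have "active_walk E' Z (us @ [x, w])"
    by (blast intro: active_walk_replace_last)
  moreover have "active_walk E' Z (x # w # ys)"
    using right dist xw by (intro active_walk_reversed_suffix) auto
  ultimately show ?thesis
    using active_walk_split_at_edge[of E' Z us x w ys] by blast
qed

lemma active_walk_reversed_skip_w:
  assumes walk: "active_walk E Z (xs @ v # w # y # ys)" and dist: "distinct (xs @ v # w # y # ys)"
    and "xs = [] \<or> (last xs, v) \<notin> E" and yw: "(y, w) \<in> E"
  shows "active_walk E' Z (xs @ v # y # ys)"
proof -
  have left: "active_walk E Z (xs @ [v, w])" and right: "active_walk E Z (w # y # ys)"
    using walk active_walk_split_at_edge[of E Z xs v w "y # ys"] by (simp_all add: active_walk_ConsD)
  have yv: "(y, v) \<in> E'" and "(w, y) \<notin> E'" "(v, y) \<notin> E'"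
    using dist yw parent_w_iff acyclic_asym[OF acyclic] by (auto simp: mem_reverse_edge_iff)
  with left dist assms(3) have "active_walk E' Z (xs @ [v, y])"
    by (intro active_walk_reversed_prefix_keep) auto
  moreover have "active_walk E' Z (w # y # ys)"
    using right dist v_neq_w by (intro active_walk_reversed_avoiding) auto
  then have "active_walk E' Z (v # y # ys)"
    using yv \<open>(w, y) \<notin> E'\<close> \<open>(v, y) \<notin> E'\<close> by (blast intro: active_walk_replace_hd)
  ultimately show ?thesis
    using active_walk_split_at_edge[of E' Z xs v y ys] by blast
qed

lemma active_walk_reversed_keep_edge:
  assumes walk: "active_walk E Z (xs @ v # w # ys)" and dist: "distinct (xs @ v # w # ys)"
    and "xs = [] \<or> (last xs, v) \<notin> E" and "ys = [] \<or> (hd ys, w) \<notin> E"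
  shows "active_walk E' Z (xs @ v # w # ys)"
proof -
  have left: "active_walk E Z (xs @ [v, w])" and right: "active_walk E Z (v # w # ys)"
    using walk active_walk_split_at_edge[of E Z xs v w ys] by auto
  have "active_walk E' Z (xs @ [v, w])"
    using left dist assms(3) by (intro active_walk_reversed_prefix_keep) (auto simp: mem_reverse_edge_iff)
  moreover have "active_walk E' Z (v # w # ys)"
    using right dist assms(4) by (intro active_walk_reversed_suffix) (auto simp: mem_reverse_edge_iff)
  ultimately show ?thesis
    using active_walk_split_at_edge[of E' Z xs v w ys] by blast
qed

lemma active_walk_reversed_through_edge:
  assumes walk: "active_walk E Z (xs @ v # w # ys)" and dist: "distinct (xs @ v # w # ys)"
  shows "\<exists>q. active_walk E' Z q \<and> hd q = hd (xs @ v # w # ys) \<and> last q = last (xs @ v # w # ys)"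
proof (cases "xs \<noteq> [] \<and> (last xs, v) \<in> E")
  case True
  then obtain us x where xs: "xs = us @ [x]" and xv: "(x, v) \<in> E"
    by (cases xs rule: rev_cases) auto
  with walk dist have "active_walk E' Z (us @ x # w # ys)"
    by (intro active_walk_reversed_skip_v) auto
  moreover have "hd (us @ x # w # ys) = hd (xs @ v # w # ys)" using xs by (cases us) auto
  ultimately show ?thesis by auto
next
  case no_skip_v: False
  show ?thesis
  proof (cases "ys \<noteq> [] \<and> (hd ys, w) \<in> E")
    case True
    then obtain y zs where ys: "ys = y # zs" and yw: "(y, w) \<in> E"
      by (cases ys) auto
    with walk dist no_skip_v have "active_walk E' Z (xs @ v # y # zs)"
      by (intro active_walk_reversed_skip_w) auto
    moreover have "hd (xs @ v # y # zs) = hd (xs @ v # w # ys)" by (cases xs) auto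
    ultimately show ?thesis using ys by auto
  next
    case False
    with walk dist no_skip_v show ?thesis
      using active_walk_reversed_keep_edge by blast
  qed
qed

lemma active_walk_reversed:
  assumes walk: "active_walk E Z p" and dist: "distinct p"
  shows "\<exists>q. active_walk E' Z q \<and> hd q = hd p \<and> last q = last p"
proof (cases "v \<in> set p")
  case False
  with walk show ?thesis
    using active_walk_reversed_avoiding by blast
next
  case True
  then obtain xs ys where p: "p = xs @ v # ys" by (meson split_list)
  show ?thesis
  proof (cases "ys \<noteq> [] \<and> hd ys = w")
    case True
    then obtain zs where "ys = w # zs" by (cases ys) auto
    with walk dist p show ?thesis
      using active_walk_reversed_through_edge by simp
  next
    case not_forward: False
    show ?thesis
    proof (cases "xs \<noteq> [] \<and> last xs = w")
      case True
      then obtain us where us: "xs = us @ [w]" by (cases xs rule: rev_cases) auto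
      have rev_p: "rev p = rev ys @ v # w # rev us" using p us by simp
      have rev_walk: "active_walk E Z (rev ys @ v # w # rev us)"
        and rev_dist: "distinct (rev ys @ v # w # rev us)"
        using walk dist unfolding rev_p[symmetric] by simp_all
      obtain q where "active_walk E' Z q" "hd q = hd (rev p)" "last q = last (rev p)"
        using active_walk_reversed_through_edge[OF rev_walk rev_dist] unfolding rev_p[symmetric] by blast
      moreover have "p \<noteq> []" using p by simp
      ultimately have "active_walk E' Z (rev q) \<and> hd (rev q) = hd p \<and> last (rev q) = last p"
        by (simp add: hd_rev last_rev)
      then show ?thesis by blast
    next
      case False
      with not_forward walk dist p show ?thesis
        using active_walk_reversed_through_v by auto
    qed
  qed
qed

lemma d_connected_reversed:
  assumes "E \<subseteq> V \<times> V" and "d_connected V E a b Z"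
  shows "d_connected V E' a b Z"
proof -
  have sub: "E' \<subseteq> V \<times> V" using assms(1) edge by (auto simp: reverse_edge_def)
  obtain p where "a \<noteq> b" "active_walk E Z p" "distinct p" "hd p = a" "last p = b"
    using assms(2) unfolding d_connected_iff_active_path[OF assms(1)] by blast
  moreover from this(2-) obtain q where "active_walk E' Z q" "hd q = a" "last q = b"
    using active_walk_reversed by blast
  ultimately show ?thesis
    unfolding d_connected_iff_active_walk[OF acyclic_reversed sub] by blast
qed

end

theorem covered_reversal_markov_equiv:
  assumes "is_dag V E" and "covered E v w"
  shows "is_dag V (reverse_edge E v w)" and "markov_equiv V E (reverse_edge E v w)"
proof -
  have acyclic: "acyclic E" and sub: "E \<subseteq> V \<times> V" and "finite V"
    using assms(1) by (simp_all add: is_dag_def)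
  interpret covered_edge E v w
    using acyclic assms(2) by unfold_locales
  interpret reversed: covered_edge E' w v
    using acyclic_reversed covered_reversed by unfold_locales
  have sub': "E' \<subseteq> V \<times> V" using sub edge by (auto simp: reverse_edge_def)
  with acyclic_reversed \<open>finite V\<close> show "is_dag V E'" by (simp add: is_dag_def)
  have "d_connected V E a b Z \<longleftrightarrow> d_connected V E' a b Z" for a b Z
    using d_connected_reversed[OF sub] reversed.d_connected_reversed[OF sub'] reverse_edge_reversed
    by auto
  then show "markov_equiv V E E'"
    by (simp add: markov_equiv_def d_separated_def)
qed

section \<open>Reversing a matching of covered edges\<close>

definition reverse_edges :: "('a \<times> 'a) set \<Rightarrow> ('a \<times> 'a) set \<Rightarrow> ('a \<times> 'a) set" where
  "reverse_edges E T = (E - T) \<union> T\<inverse>"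

lemma reverse_edges_insert:
  "(w, v) \<notin> T \<Longrightarrow> reverse_edge (reverse_edges E T) v w = reverse_edges E (insert (v, w) T)"
  by (auto simp: reverse_edge_def reverse_edges_def)

lemma parents_reverse_edges:
  "\<forall>(a, b) \<in> T. a \<noteq> x \<and> b \<noteq> x \<Longrightarrow> parents (reverse_edges E T) x = parents E x"
  by (auto simp: parents_def reverse_edges_def)

lemma inj_on_reverse_edges:
  assumes "acyclic E"
  shows "inj_on (reverse_edges E) (Pow E)"
proof -
  have "T \<subseteq> U" if "T \<subseteq> E" "reverse_edges E T = reverse_edges E U" for T U
  proof
    fix e assume "e \<in> T"
    moreover obtain a b where e: "e = (a, b)" by (cases e)
    ultimately have "(b, a) \<in> reverse_edges E U" "(a, b) \<in> E"
      using that by (auto simp: reverse_edges_def)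
    moreover have "(b, a) \<notin> E" using acyclic_asym[OF assms] \<open>(a, b) \<in> E\<close> .
    ultimately show "e \<in> U" using e by (auto simp: reverse_edges_def)
  qed
  then show ?thesis by (intro inj_onI) blast
qed

lemma edge_matching_disjoint:
  "edge_matching S \<Longrightarrow> (v, w) \<in> S \<Longrightarrow> (a, b) \<in> S \<Longrightarrow> (a, b) \<noteq> (v, w) \<Longrightarrow> a \<notin> {v, w} \<and> b \<notin> {v, w}"
  unfolding edge_matching_def by fastforce

lemma covered_reverse_edges:
  assumes "covered E v w" and "\<forall>(a, b) \<in> T. a \<notin> {v, w} \<and> b \<notin> {v, w}"
  shows "covered (reverse_edges E T) v w"
proof -
  have "parents (reverse_edges E T) v = parents E v" "parents (reverse_edges E T) w = parents E w"
    using parents_reverse_edges[of T v E] parents_reverse_edges[of T w E] assms(2) by auto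
  moreover have "(v, w) \<in> reverse_edges E T"
    using assms by (auto simp: covered_def reverse_edges_def)
  ultimately show ?thesis
    using assms(1) by (simp add: covered_def)
qed

lemma reverse_edges_in_MEC:
  assumes dag: "is_dag V E" and "S \<subseteq> E" and covered: "\<forall>(v, w) \<in> S. covered E v w"
    and "edge_matching S" and "finite T" and "T \<subseteq> S"
  shows "reverse_edges E T \<in> MEC V E"
  using assms(5,6)
proof (induction T rule: finite_induct)
  case empty
  with dag show ?case by (simp add: MEC_def reverse_edges_def markov_equiv_def)
next
  case (insert e T)
  obtain v w where e: "e = (v, w)" by (cases e)
  have R: "is_dag V (reverse_edges E T)" "markov_equiv V E (reverse_edges E T)"
    using insert by (simp_all add: MEC_def)
  have avoid: "\<forall>(a, b) \<in> T. a \<notin> {v, w} \<and> b \<notin> {v, w}"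
    using insert.hyps(2) insert.prems edge_matching_disjoint[OF assms(4)] e by blast
  have "covered (reverse_edges E T) v w"
    using covered insert.prems e avoid by (intro covered_reverse_edges) auto
  then have "is_dag V (reverse_edge (reverse_edges E T) v w)"
    "markov_equiv V E (reverse_edge (reverse_edges E T) v w)"
    using covered_reversal_markov_equiv[OF R(1)] markov_equiv_trans[OF R(2)] by blast+
  moreover have "(w, v) \<notin> T" using avoid by auto
  ultimately show ?case
    using reverse_edges_insert[of w v T E] e by (simp add: MEC_def)
qed

lemma finite_MEC: "finite V \<Longrightarrow> finite (MEC V E)"
  by (rule finite_subset[of _ "Pow (V \<times> V)"]) (auto simp: MEC_def is_dag_def)

theorem mainTheorem4:
  fixes V :: "'a set" and E S :: "('a \<times> 'a) set"
  assumes "is_dag V E"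
    and "S \<subseteq> E"
    and "\<forall>(v, w) \<in> S. reversible V E v w"
    and "edge_matching S"
  shows "2 ^ card S \<le> card (MEC V E)"
proof -
  have acyclic: "acyclic E" and "finite V" and sub: "E \<subseteq> V \<times> V"
    using assms(1) by (simp_all add: is_dag_def)
  then have "finite S"
    using finite_subset[OF subset_trans[OF assms(2) sub]] by simp
  have covered: "\<forall>(v, w) \<in> S. covered E v w"
    using assms(3) reversible_imp_covered[OF assms(1)] by blast
  have "reverse_edges E T \<in> MEC V E" if "T \<subseteq> S" for T
    using reverse_edges_in_MEC[OF assms(1,2) covered assms(4) finite_subset[OF that \<open>finite S\<close>] that] .
  then have "card (reverse_edges E ` Pow S) \<le> card (MEC V E)"
    by (intro card_mono finite_MEC \<open>finite V\<close>) blast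
  moreover have "inj_on (reverse_edges E) (Pow S)"
    using inj_on_reverse_edges[OF acyclic] Pow_mono[OF assms(2)] by (rule inj_on_subset)
  then have "card (reverse_edges E ` Pow S) = 2 ^ card S"
    using \<open>finite S\<close> by (simp add: card_image card_Pow)
  ultimately show ?thesis by simp
qed

end
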